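(* For all positive integers $n,m$, every closed knight tour on the $n\times m$ board is bi-sited.
   Context: The $n\times m$ board is $\{1,\dots,n\}\times\{1,\dots,m\}$; a knight moves from $(x,y)$ to $(x',y')$ iff $\{|x-x'|,|y-y'|\}=\{1,2\}$. A closed knight tour is a Hamiltonian cycle in the resulting graph. A pair of edges $((a_1,b_1),(a_2,b_2))$ and $((c_1,d_1),(c_2,d_2))$ of a tour is a \emph{site} if $(|a_1-c_1|,|b_1-d_1|)=(|a_2-c_2|,|b_2-d_2|)\in\{(0,2),(2,0)\}$ or $(|a_1-c_2|,|b_1-d_2|)=(|a_2-c_1|,|b_2-d_1|)\in\{(0,2),(2,0)\}$. A tour is \emph{bi-sited} if it contains two sites with disjoint support, i.e. such that the endpoints of the four edges involved are pairwise distinct. *)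

theory Defs
  imports Main
begin

type_synonym square = "int \<times> int"

definition board :: "nat \<Rightarrow> nat \<Rightarrow> square set" where
  "board n m = {1..int n} \<times> {1..int m}"

definition knight_move :: "square \<Rightarrow> square \<Rightarrow> bool" where
  "knight_move s t = ({\<bar>fst s - fst t\<bar>, \<bar>snd s - snd t\<bar>} = {1, 2})"

definition closed_knight_tour :: "nat \<Rightarrow> nat \<Rightarrow> square list \<Rightarrow> bool" where
  "closed_knight_tour n m p \<longleftrightarrow>
     distinct p \<and> set p = board n m \<and> length p \<ge> 3 \<and>
     (\<forall>i < length p. knight_move (p ! i) (p ! ((i + 1) mod length p)))"

text \<open>The edges of the tour (each undirected edge given by one orientation).\<close>
definition tour_edges :: "square list \<Rightarrow> (square \<times> square) set" where
  "tour_edges p = {(p ! i, p ! ((i + 1) mod length p)) | i. i < length p}"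

definition two_step :: "int \<times> int \<Rightarrow> bool" where
  "two_step d \<longleftrightarrow> d = (0, 2) \<or> d = (2, 0)"

definition absdiff :: "square \<Rightarrow> square \<Rightarrow> int \<times> int" where
  "absdiff s t = (\<bar>fst s - fst t\<bar>, \<bar>snd s - snd t\<bar>)"

definition is_site :: "square \<times> square \<Rightarrow> square \<times> square \<Rightarrow> bool" where
  "is_site e f \<longleftrightarrow>
     (absdiff (fst e) (fst f) = absdiff (snd e) (snd f) \<and> two_step (absdiff (fst e) (fst f))) \<or>
     (absdiff (fst e) (snd f) = absdiff (snd e) (fst f) \<and> two_step (absdiff (fst e) (snd f)))"

definition bi_sited :: "square list \<Rightarrow> bool" where
  "bi_sited p \<longleftrightarrow>
     (\<exists>e1\<in>tour_edges p. \<exists>f1\<in>tour_edges p. \<exists>e2\<in>tour_edges p. \<exists>f2\<in>tour_edges p.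
        is_site e1 f1 \<and> is_site e2 f2 \<and>
        distinct [fst e1, snd e1, fst f1, snd f1, fst e2, snd e2, fst f2, snd f2])"

end

theory Submission
  imports Defs
begin

(* Every square lies on exactly two edges of a closed tour. At a corner this is rigid: the corner
   (1,1) is joined to both (2,3) and (3,2), and (1,3) to one of (2,1), (3,4), (2,5), and each such
   edge forms a site with an edge at the corner. A board with at least six columns (or, after
   transposing, six rows) therefore has disjoint sites at opposite ends. All other boards carrying
   a closed tour would have both sides in {3, 4, 5}: a side of length at most 2 leaves a corner with
   a single knight move, colours alternate along the tour so the area is even, and a side of
   length 4 is impossible by the classical colouring argument for 4 x m boards. *)

lemma knight_move_commute: "knight_move s t \<longleftrightarrow> knight_move t s"
  unfolding knight_move_def by (simp add: abs_minus_commute)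

lemma knight_move_swap: "knight_move (prod.swap s) (prod.swap t) \<longleftrightarrow> knight_move s t"
  unfolding knight_move_def by (simp add: insert_commute)

lemma knight_move_iff:
  "knight_move (x, y) u \<longleftrightarrow>
     u \<in> {(x+1,y+2), (x+1,y-2), (x-1,y+2), (x-1,y-2), (x+2,y+1), (x+2,y-1), (x-2,y+1), (x-2,y-1)}"
proof -
  obtain a b where u: "u = (a, b)" by fastforce
  have "\<bar>x-a\<bar> = 1 \<longleftrightarrow> a = x-1 \<or> a = x+1" "\<bar>x-a\<bar> = 2 \<longleftrightarrow> a = x-2 \<or> a = x+2"
    "\<bar>y-b\<bar> = 1 \<longleftrightarrow> b = y-1 \<or> b = y+1" "\<bar>y-b\<bar> = 2 \<longleftrightarrow> b = y-2 \<or> b = y+2"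
    by arith+
  then show ?thesis
    unfolding knight_move_def u by (auto simp: doubleton_eq_iff)
qed

lemma Suc_mod_eq: "i < L \<Longrightarrow> Suc i mod L = (if Suc i = L then 0 else Suc i)"
  by auto

lemma Suc_mod_less: "i < L \<Longrightarrow> Suc i mod L < L"
  by (simp add: Suc_mod_eq)

lemma cyclic_alternating_parity:
  assumes alt: "\<forall>i<L. Q (Suc i mod L) \<longleftrightarrow> \<not> Q i" and "i < L"
  shows "Q i \<longleftrightarrow> (Q 0 \<longleftrightarrow> even i)"
  using \<open>i < L\<close>
proof (induction i)
  case (Suc i)
  then show ?case using alt[rule_format, of i] by simp
qed simp

lemma cyclic_alternating_even_length:
  assumes alt: "\<forall>i<L. Q (Suc i mod L) \<longleftrightarrow> \<not> Q i" and "0 < L"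
  shows "even L"
proof -
  have "Q 0 \<longleftrightarrow> \<not> Q (L - 1)"
    using alt[rule_format, of "L - 1"] \<open>0 < L\<close> by simp
  then show ?thesis
    using cyclic_alternating_parity[OF alt, of "L - 1"] \<open>0 < L\<close> by auto
qed

lemma cyclic_half_alternates:
  assumes sep: "\<forall>i<L. \<not> (P i \<and> P (Suc i mod L))"
    and half: "2 * card {i. i < L \<and> P i} = L"
    and "i < L"
  shows "P (Suc i mod L) \<longleftrightarrow> \<not> P i"
proof (cases "P i")
  case False
  define A where "A = {i. i < L \<and> P i}"
  define succ where "succ i = Suc i mod L" for i
  have inj: "inj_on succ {..<L}"
    by (auto simp: inj_on_def succ_def Suc_mod_eq split: if_splits)
  have "succ ` A \<subseteq> {..<L} - A"
    using sep by (auto simp: A_def succ_def)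
  moreover have "card (succ ` A) = card ({..<L} - A)"
    using half card_image[OF inj_on_subset[OF inj]]
    by (simp add: A_def card_Diff_subset subset_eq)
  ultimately have succ_A: "succ ` A = {..<L} - A"
    by (intro card_subset_eq) auto
  show ?thesis
  proof (rule ccontr)
    assume "\<not> ?thesis"
    then have "succ i \<in> succ ` A"
      using False \<open>i < L\<close> succ_A by (auto simp: A_def succ_def)
    then obtain j where "j \<in> A" "succ j = succ i"
      by auto
    then have "j = i" using inj \<open>i < L\<close> by (auto simp: A_def inj_on_def)
    then show False using \<open>j \<in> A\<close> False by (simp add: A_def)
  qed
qed (use sep \<open>i < L\<close> in auto)

definition light_square :: "square \<Rightarrow> bool" where
  "light_square s \<longleftrightarrow> even (fst s + snd s)"

lemma knight_move_light_square:
  "knight_move s t \<Longrightarrow> light_square t \<longleftrightarrow> \<not> light_square s"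
  unfolding light_square_def by (cases s) (auto simp: knight_move_iff)

lemma knight_move_fst_dist: "knight_move s t \<Longrightarrow> \<bar>fst s - fst t\<bar> \<in> {1, 2}"
  unfolding knight_move_def by blast

definition tour_adjacent :: "square list \<Rightarrow> square \<Rightarrow> square \<Rightarrow> bool" where
  "tour_adjacent p u v \<longleftrightarrow> (u, v) \<in> tour_edges p \<or> (v, u) \<in> tour_edges p"

lemma tour_adjacent_commute: "tour_adjacent p u v \<longleftrightarrow> tour_adjacent p v u"
  unfolding tour_adjacent_def by blast

lemma tour_adjacent_succ: "i < length p \<Longrightarrow> tour_adjacent p (p ! i) (p ! (Suc i mod length p))"
  unfolding tour_adjacent_def tour_edges_def by auto

context
  fixes n m :: nat and p :: "square list"
  assumes tour: "closed_knight_tour n m p"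
begin

lemma tour_distinct: "distinct p"
  and set_tour: "set p = board n m"
  and length_tour_ge_3: "3 \<le> length p"
  and knight_move_tour_succ: "i < length p \<Longrightarrow> knight_move (p ! i) (p ! (Suc i mod length p))"
  using tour unfolding closed_knight_tour_def by auto

lemma length_tour: "length p = n * m"
proof -
  have "length p = card (board n m)"
    using distinct_card[OF tour_distinct] set_tour by simp
  also have "\<dots> = n * m"
    by (simp add: board_def card_cartesian_product)
  finally show ?thesis .
qed

lemma tour_adjacent_knight_move:
  assumes "tour_adjacent p u v"
  shows "knight_move u v \<and> v \<in> board n m"
proof -
  obtain i where i: "i < length p"
    and uv: "(u, v) = (p ! i, p ! (Suc i mod length p)) \<or> (v, u) = (p ! i, p ! (Suc i mod length p))"
    using assms unfolding tour_adjacent_def tour_edges_def by auto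
  have "Suc i mod length p < length p"
    using i by (auto simp: Suc_mod_eq)
  from nth_mem[OF i] nth_mem[OF this]
  have "p ! i \<in> board n m" "p ! (Suc i mod length p) \<in> board n m"
    using set_tour by simp_all
  moreover have "knight_move u v"
    using uv knight_move_tour_succ[OF i] knight_move_commute by (metis prod.inject)
  ultimately show ?thesis
    using uv by auto
qed

lemma two_tour_neighbours:
  assumes "v \<in> board n m"
  obtains a b where "a \<noteq> b" "tour_adjacent p v a" "tour_adjacent p v b"
proof -
  let ?L = "length p"
  obtain i where i: "i < ?L" "v = p ! i"
    using assms set_tour by (metis in_set_conv_nth)
  define j where "j = (if i = 0 then ?L - 1 else i - 1)"
  have j: "j < ?L" "Suc j mod ?L = i"
    using i(1) by (auto simp: j_def Suc_mod_eq)
  have "Suc i mod ?L < ?L" "Suc i mod ?L \<noteq> j"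
    using i(1) length_tour_ge_3 by (auto simp: j_def Suc_mod_eq)
  then have "p ! (Suc i mod ?L) \<noteq> p ! j"
    using nth_eq_iff_index_eq[OF tour_distinct] j(1) by simp
  moreover have "tour_adjacent p v (p ! (Suc i mod ?L))"
    using tour_adjacent_succ[OF i(1)] i(2) by simp
  moreover have "tour_adjacent p v (p ! j)"
    using tour_adjacent_succ[OF j(1)] j(2) i(2) tour_adjacent_commute by metis
  ultimately show ?thesis
    using that by blast
qed

lemma tour_colours_alternate:
  "\<forall>i<length p. light_square (p ! (Suc i mod length p)) \<longleftrightarrow> \<not> light_square (p ! i)"
  using knight_move_tour_succ knight_move_light_square by blast

lemma board_dims_pos: "0 < n" "0 < m"
  using length_tour length_tour_ge_3 by (cases n; cases m; simp)+

lemma even_board_area: "even (n * m)"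
  using cyclic_alternating_even_length[OF tour_colours_alternate] length_tour board_dims_pos
  by simp

lemma tour_width_ge_3: "3 \<le> n"
proof (rule ccontr)
  assume "\<not> 3 \<le> n"
  have "(1, 1) \<in> board n m"
    using board_dims_pos by (simp add: board_def)
  then obtain a b where "a \<noteq> b" "tour_adjacent p (1, 1) a" "tour_adjacent p (1, 1) b"
    by (rule two_tour_neighbours)
  moreover have "u = (2, 3)" if "tour_adjacent p (1, 1) u" for u
    using tour_adjacent_knight_move[OF that] \<open>\<not> 3 \<le> n\<close> by (auto simp: knight_move_iff board_def)
  ultimately show False
    by blast
qed

end

lemma board_transpose: "prod.swap ` board n m = board m n"
  by (simp add: board_def product_swap)

lemma closed_knight_tour_transpose:
  assumes "closed_knight_tour n m p"
  shows "closed_knight_tour m n (map prod.swap p)"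
  using assms unfolding closed_knight_tour_def
  by (simp add: distinct_map board_transpose knight_move_swap Suc_mod_less)

lemma tour_height_ge_3: "closed_knight_tour n m p \<Longrightarrow> 3 \<le> m"
  using tour_width_ge_3[OF closed_knight_tour_transpose] .

lemma tour_edges_eq_image: "tour_edges p = (\<lambda>i. (p ! i, p ! (Suc i mod length p))) ` {..<length p}"
  unfolding tour_edges_def by auto

lemma tour_edges_map: "tour_edges (map f p) = map_prod f f ` tour_edges p"
  unfolding tour_edges_eq_image image_image
  by (rule image_cong) (simp_all add: Suc_mod_less)

lemma absdiff_swap: "absdiff (prod.swap a) (prod.swap b) = prod.swap (absdiff a b)"
  by (simp add: absdiff_def)

lemma is_site_transpose:
  "is_site (map_prod prod.swap prod.swap e) (map_prod prod.swap prod.swap f) \<longleftrightarrow> is_site e f"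
proof -
  have "two_step (prod.swap d) \<longleftrightarrow> two_step d" for d
    by (cases d) (auto simp: two_step_def)
  then show ?thesis
    by (simp add: is_site_def absdiff_swap inj_eq[OF inj_swap])
qed

lemma bi_sited_transpose:
  assumes "bi_sited p"
  shows "bi_sited (map prod.swap p)"
proof -
  let ?t = "map_prod prod.swap prod.swap"
  obtain e1 f1 e2 f2
    where edges: "e1 \<in> tour_edges p" "f1 \<in> tour_edges p" "e2 \<in> tour_edges p" "f2 \<in> tour_edges p"
    and sites: "is_site e1 f1" "is_site e2 f2"
    and dist: "distinct [fst e1, snd e1, fst f1, snd f1, fst e2, snd e2, fst f2, snd f2]"
    using assms unfolding bi_sited_def by blast
  have "distinct (map prod.swap [fst e1, snd e1, fst f1, snd f1, fst e2, snd e2, fst f2, snd f2])"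
    using dist by (simp only: distinct_map inj_swap simp_thms)
  then have "distinct [fst (?t e1), snd (?t e1), fst (?t f1), snd (?t f1),
                       fst (?t e2), snd (?t e2), fst (?t f2), snd (?t f2)]"
    by (simp add: map_prod_def split_def)
  with edges sites show ?thesis
    unfolding bi_sited_def tour_edges_map
    by (blast intro: is_site_transpose[THEN iffD2])
qed

(* The outer rows hold half the squares and no two of them are a knight move apart, so the tour
   alternates between outer and inner rows exactly as it alternates colours; then all outer squares
   would have the same colour. *)
lemma no_closed_knight_tour_4_by_m: "\<not> closed_knight_tour 4 m p"
proof
  assume tour: "closed_knight_tour 4 m p"
  let ?L = "length p"
  define outer where "outer i \<longleftrightarrow> fst (p ! i) \<in> {1, 4}" for i
  have "\<not> (outer i \<and> outer (Suc i mod ?L))" if "i < ?L" for i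
    using knight_move_fst_dist[OF knight_move_tour_succ[OF tour that]] by (auto simp: outer_def)
  moreover have "2 * card {i. i < ?L \<and> outer i} = ?L"
  proof -
    have "card {i. i < ?L \<and> outer i} = card ({s. fst s \<in> {1, 4}} \<inter> set p)"
      using distinct_length_filter[OF tour_distinct[OF tour]]
      by (simp add: length_filter_conv_card outer_def)
    also have "{s. fst s \<in> {1, 4}} \<inter> set p = {1, 4} \<times> {1..int m}"
      using set_tour[OF tour] by (auto simp: board_def)
    finally show ?thesis
      using length_tour[OF tour] by (simp add: card_cartesian_product)
  qed
  ultimately have outer_alternates: "\<forall>i<?L. outer (Suc i mod ?L) \<longleftrightarrow> \<not> outer i"
    using cyclic_half_alternates[of ?L outer] by blast
  have outer_iff_light: "outer i \<longleftrightarrow> (light_square (p ! i) \<longleftrightarrow> (outer 0 \<longleftrightarrow> light_square (p ! 0)))"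
    if "i < ?L" for i
    using cyclic_alternating_parity[OF outer_alternates that]
      cyclic_alternating_parity[OF tour_colours_alternate[OF tour] that] by blast
  have "(1, 1) \<in> set p" "(1, 2) \<in> set p"
    using set_tour[OF tour] tour_height_ge_3[OF tour] by (auto simp: board_def)
  then obtain i j where "i < ?L" "p ! i = (1, 1)" "j < ?L" "p ! j = (1, 2)"
    by (metis in_set_conv_nth)
  then show False
    using outer_iff_light[of i] outer_iff_light[of j] by (simp add: outer_def light_square_def)
qed

lemma no_closed_knight_tour_n_by_4: "\<not> closed_knight_tour n 4 p"
  using no_closed_knight_tour_4_by_m closed_knight_tour_transpose by blast

definition site_within :: "square list \<Rightarrow> square set \<Rightarrow> bool" where
  "site_within p R \<longleftrightarrow> (\<exists>a1 a2 c1 c2. tour_adjacent p a1 a2 \<and> tour_adjacent p c1 c2 \<and>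
     absdiff a1 c1 = absdiff a2 c2 \<and> two_step (absdiff a1 c1) \<and>
     distinct [a1, a2, c1, c2] \<and> {a1, a2, c1, c2} \<subseteq> R)"

lemma site_of_tour_adjacent:
  assumes "tour_adjacent p a1 a2" "tour_adjacent p c1 c2"
    and "absdiff a1 c1 = absdiff a2 c2" "two_step (absdiff a1 c1)"
  obtains e f where "e \<in> tour_edges p" "f \<in> tour_edges p" "is_site e f"
    "{fst e, snd e} = {a1, a2}" "{fst f, snd f} = {c1, c2}"
proof -
  obtain e where "e \<in> tour_edges p" "e = (a1, a2) \<or> e = (a2, a1)"
    using assms(1) unfolding tour_adjacent_def by blast
  moreover obtain f where "f \<in> tour_edges p" "f = (c1, c2) \<or> f = (c2, c1)"
    using assms(2) unfolding tour_adjacent_def by blast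
  moreover have "is_site (a1, a2) (c1, c2)" "is_site (a1, a2) (c2, c1)"
    "is_site (a2, a1) (c1, c2)" "is_site (a2, a1) (c2, c1)"
    using assms(3,4) unfolding is_site_def by simp_all
  ultimately show ?thesis
    using that[of e f] by (elim disjE) (simp_all add: insert_commute)
qed

lemma bi_sited_if_disjoint_sites:
  assumes "site_within p R1" "site_within p R2" "R1 \<inter> R2 = {}"
  shows "bi_sited p"
proof -
  obtain a1 a2 c1 c2 where A: "tour_adjacent p a1 a2" "tour_adjacent p c1 c2"
    "absdiff a1 c1 = absdiff a2 c2" "two_step (absdiff a1 c1)"
    "distinct [a1, a2, c1, c2]" "{a1, a2, c1, c2} \<subseteq> R1"
    using assms(1) unfolding site_within_def by blast
  obtain b1 b2 d1 d2 where B: "tour_adjacent p b1 b2" "tour_adjacent p d1 d2"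
    "absdiff b1 d1 = absdiff b2 d2" "two_step (absdiff b1 d1)"
    "distinct [b1, b2, d1, d2]" "{b1, b2, d1, d2} \<subseteq> R2"
    using assms(2) unfolding site_within_def by blast
  obtain e1 f1 where E1: "e1 \<in> tour_edges p" "f1 \<in> tour_edges p" "is_site e1 f1"
    "{fst e1, snd e1} = {a1, a2}" "{fst f1, snd f1} = {c1, c2}"
    using site_of_tour_adjacent[OF A(1-4)] .
  obtain e2 f2 where E2: "e2 \<in> tour_edges p" "f2 \<in> tour_edges p" "is_site e2 f2"
    "{fst e2, snd e2} = {b1, b2}" "{fst f2, snd f2} = {d1, d2}"
    using site_of_tour_adjacent[OF B(1-4)] .
  let ?xs = "[fst e1, snd e1, fst f1, snd f1, fst e2, snd e2, fst f2, snd f2]"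
  let ?ys = "[a1, a2, c1, c2, b1, b2, d1, d2]"
  have "set ?xs = set ?ys"
    using E1(4,5) E2(4,5) by auto
  moreover have "distinct ?ys"
    using A(5,6) B(5,6) assms(3) by auto
  ultimately have "distinct ?xs"
    by (intro card_distinct) (metis distinct_card length_Cons list.size(3))
  with E1 E2 show ?thesis
    unfolding bi_sited_def by blast
qed

(* A is a corner with knight neighbours X1, X2 on the board; B is on the same edge two squares away,
   and each of its possible tour neighbours other than X2 completes a site with a neighbour of A. *)
lemma site_within_at_corner:
  assumes tour: "closed_knight_tour n m p"
    and "A \<in> board n m" "B \<in> board n m"
    and A_adj: "\<And>u. tour_adjacent p A u \<Longrightarrow> u \<in> {X1, X2}"
    and B_adj: "\<And>u. tour_adjacent p B u \<Longrightarrow> u \<in> {Y1, X2, Y2, Y3}"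
    and sites: "\<And>X Y. (X, Y) \<in> {(X1, Y1), (X2, Y2), (X1, Y3)} \<Longrightarrow>
       absdiff A B = absdiff X Y \<and> distinct [A, X, B, Y] \<and> {A, X, B, Y} \<subseteq> R"
    and "two_step (absdiff A B)"
  shows "site_within p R"
proof -
  obtain a a' where "a \<noteq> a'" "tour_adjacent p A a" "tour_adjacent p A a'"
    using two_tour_neighbours[OF tour \<open>A \<in> board n m\<close>] .
  with A_adj have X: "tour_adjacent p A X1" "tour_adjacent p A X2"
    by blast+
  obtain b b' where "b \<noteq> b'" "tour_adjacent p B b" "tour_adjacent p B b'"
    using two_tour_neighbours[OF tour \<open>B \<in> board n m\<close>] .
  with B_adj obtain Y where "tour_adjacent p B Y" "Y \<in> {Y1, Y2, Y3}"
    by blast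
  with X obtain X where "tour_adjacent p A X" "tour_adjacent p B Y"
    "(X, Y) \<in> {(X1, Y1), (X2, Y2), (X1, Y3)}"
    by blast
  with sites[of X Y] \<open>two_step (absdiff A B)\<close> show ?thesis
    unfolding site_within_def by blast
qed

lemma site_within_left_edge:
  assumes tour: "closed_knight_tour n m p"
  shows "site_within p {q. fst q \<le> 3}"
proof (rule site_within_at_corner[OF tour, of "(1, 1)" "(1, 3)" "(2, 3)" "(3, 2)" "(2, 1)" "(3, 4)" "(2, 5)"])
  show "(1, 1) \<in> board n m" "(1, 3) \<in> board n m"
    using tour_width_ge_3[OF tour] tour_height_ge_3[OF tour] by (simp_all add: board_def)
  show "u \<in> {(2, 3), (3, 2)}" if "tour_adjacent p (1, 1) u" for u
    using tour_adjacent_knight_move[OF tour that] by (auto simp: knight_move_iff board_def)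
  show "u \<in> {(2, 1), (3, 2), (3, 4), (2, 5)}" if "tour_adjacent p (1, 3) u" for u
    using tour_adjacent_knight_move[OF tour that] by (auto simp: knight_move_iff board_def)
qed (auto simp: absdiff_def two_step_def)

lemma site_within_right_edge:
  assumes tour: "closed_knight_tour n m p"
  shows "site_within p {q. int n - 2 \<le> fst q}"
proof (rule site_within_at_corner[OF tour, of "(int n, 1)" "(int n, 3)" "(int n - 1, 3)" "(int n - 2, 2)"
      "(int n - 1, 1)" "(int n - 2, 4)" "(int n - 1, 5)"])
  show "(int n, 1) \<in> board n m" "(int n, 3) \<in> board n m"
    using tour_width_ge_3[OF tour] tour_height_ge_3[OF tour] by (simp_all add: board_def)
  show "u \<in> {(int n - 1, 3), (int n - 2, 2)}" if "tour_adjacent p (int n, 1) u" for u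
    using tour_adjacent_knight_move[OF tour that] by (auto simp: knight_move_iff board_def)
  show "u \<in> {(int n - 1, 1), (int n - 2, 2), (int n - 2, 4), (int n - 1, 5)}"
    if "tour_adjacent p (int n, 3) u" for u
    using tour_adjacent_knight_move[OF tour that] by (auto simp: knight_move_iff board_def)
qed (auto simp: absdiff_def two_step_def)

lemma bi_sited_if_wide:
  assumes "closed_knight_tour n m p" "6 \<le> n"
  shows "bi_sited p"
  by (rule bi_sited_if_disjoint_sites[OF site_within_left_edge[OF assms(1)]
        site_within_right_edge[OF assms(1)]]) (use assms(2) in auto)

theorem proposition4p2:
  fixes n m :: nat and p :: "square list"
  assumes "n > 0" and "m > 0"
    and "closed_knight_tour n m p"
  shows "bi_sited p"
proof -
  (* the positivity hypotheses already follow from the existence of a tour *)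
  note tour = \<open>closed_knight_tour n m p\<close>
  consider "6 \<le> n" | "6 \<le> m" | "n \<in> {3, 4, 5}" "m \<in> {3, 4, 5}"
    using tour_width_ge_3[OF tour] tour_height_ge_3[OF tour] by force
  then show ?thesis
  proof cases
    case 1
    then show ?thesis using bi_sited_if_wide[OF tour] by blast
  next
    case 2
    then have "bi_sited (map prod.swap (map prod.swap p))"
      using bi_sited_transpose bi_sited_if_wide[OF closed_knight_tour_transpose[OF tour]] by blast
    then show ?thesis by simp
  next
    case 3
    moreover have "n \<noteq> 4" "m \<noteq> 4"
      using tour no_closed_knight_tour_4_by_m no_closed_knight_tour_n_by_4 by blast+
    ultimately show ?thesis
      using even_board_area[OF tour] by auto
  qed
qed
end
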